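(* Let $0\le\alpha<d$, $1<p<d/\alpha$, $\frac1q=\frac1p-\frac\alpha d$, and let $W$ be any matrix weight for which $\|W^{-1/q}\|^{p'}$ is locally integrable. Let $\mathscr D$ be a dyadic grid and $M'_{W,\alpha}\vec f(x)=\sup_{Q\in\mathscr D,\,Q\ni x}\frac{1}{|Q|^{1-\alpha/d}}\int_Q|\mathcal V_Q^{-1}W^{-1/q}(y)\vec f(y)|dy$. Then $M'_{W,\alpha}$ is of weak type $(p,q)$: for all $\lambda>0$ and $\vec f\in L^p(\mathbb{R}^d;\mathbb{C}^n)$, $$|\{x:M'_{W,\alpha}\vec f(x)>\lambda\}|\lesssim\lambda^{-q}\|\vec f\|_{L^p}^q,$$ with constant depending only on $n,d,p,\alpha$.
   Context: A matrix weight is $W:\mathbb{R}^d\to\mathcal{M}_{n\times n}(\mathbb{C})$ with locally integrable, a.e. positive definite values. For each cube $Q$, $\mathcal V_Q$ is a positive definite $n\times n$ matrix with $\left(\frac1{|Q|}\int_Q|W^{-1/q}\vec e|^{p'}\right)^{1/p'}\le|\mathcal V_Q\vec e|\le\sqrt n\left(\frac1{|Q|}\int_Q|W^{-1/q}\vec e|^{p'}\right)^{1/p'}$ for all $\vec e\in\mathbb{C}^n$. A dyadic grid $\mathscr D$ is a collection of cubes with side lengths powers of $2$, each generation partitioning $\mathbb{R}^d$, and any two cubes either disjoint or nested. *)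

theory Defs
  imports "HOL-Analysis.Analysis"
begin

definition cadj :: "complex^'n^'n \<Rightarrow> complex^'n^'n" where
  "cadj A = (\<chi> i j. cnj (A $ j $ i))"

definition hermitian :: "complex^'n^'n \<Rightarrow> bool" where
  "hermitian A \<longleftrightarrow> cadj A = A"

definition posdef :: "complex^'n^'n \<Rightarrow> bool" where
  "posdef A \<longleftrightarrow> hermitian A \<and>
     (\<forall>v::complex^'n. v \<noteq> 0 \<longrightarrow> 0 < Re (\<Sum>i\<in>UNIV. \<Sum>j\<in>UNIV. cnj (v $ i) * A $ i $ j * v $ j))"

definition unitary :: "complex^'n^'n \<Rightarrow> bool" where
  "unitary U \<longleftrightarrow> U ** cadj U = mat 1 \<and> cadj U ** U = mat 1"

definition cdiag :: "('n \<Rightarrow> real) \<Rightarrow> complex^'n^'n" where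
  "cdiag lam = (\<chi> i j. if i = j then complex_of_real (lam i) else 0)"

text \<open>Real power A^s of a positive definite matrix via spectral decomposition
  A = U diag(lam) U^*, A^s = U diag(lam^s) U^* (well defined for positive definite A).\<close>
definition mpow :: "complex^'n^'n \<Rightarrow> real \<Rightarrow> complex^'n^'n" where
  "mpow A s = (SOME B. \<exists>U lam. unitary U \<and> (\<forall>i. 0 < lam i) \<and>
       A = U ** cdiag lam ** cadj U \<and> B = U ** cdiag (\<lambda>i. lam i powr s) ** cadj U)"

definition cube :: "real^'d \<Rightarrow> real \<Rightarrow> (real^'d) set" where
  "cube a l = {x. \<forall>i. a $ i \<le> x $ i \<and> x $ i < a $ i + l}"

definition is_cube :: "(real^'d) set \<Rightarrow> bool" where
  "is_cube Q \<longleftrightarrow> (\<exists>a l. 0 < l \<and> Q = cube a l)"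

definition dyadic_grid :: "(real^'d) set set \<Rightarrow> bool" where
  "dyadic_grid D \<longleftrightarrow>
     (\<forall>Q\<in>D. \<exists>a (k::int). Q = cube a (2 powr real_of_int k)) \<and>
     (\<forall>k::int. \<Union>{Q\<in>D. \<exists>a. Q = cube a (2 powr real_of_int k)} = UNIV \<and>
        disjoint {Q\<in>D. \<exists>a. Q = cube a (2 powr real_of_int k)}) \<and>
     (\<forall>Q\<in>D. \<forall>R\<in>D. Q \<inter> R = {} \<or> Q \<subseteq> R \<or> R \<subseteq> Q)"

definition matrix_weight :: "(real^'d \<Rightarrow> complex^'n^'n) \<Rightarrow> bool" where
  "matrix_weight W \<longleftrightarrow>
     (\<forall>K i j. compact K \<longrightarrow> set_integrable lebesgue K (\<lambda>x. W x $ i $ j)) \<and>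
     (AE x in lebesgue. posdef (W x))"

definition outer_lebesgue :: "(real^'d) set \<Rightarrow> ennreal" where
  "outer_lebesgue S = (INF T\<in>{T\<in>sets lebesgue. S \<subseteq> T}. emeasure lebesgue T)"

definition max_op ::
  "(real^'d) set set \<Rightarrow> real \<Rightarrow> real \<Rightarrow> (real^'d \<Rightarrow> complex^'n^'n) \<Rightarrow>
   ((real^'d) set \<Rightarrow> complex^'n^'n) \<Rightarrow> (real^'d \<Rightarrow> complex^'n) \<Rightarrow> real^'d \<Rightarrow> ennreal" where
  "max_op D \<alpha> q W V f x =
     (SUP Q\<in>{Q\<in>D. x \<in> Q}.
        ennreal (1 / (measure lebesgue Q) powr (1 - \<alpha> / real CARD('d))) *
        (\<integral>\<^sup>+ y\<in>Q. ennreal (norm (matrix_inv (V Q) *v (mpow (W y) (- 1 / q) *v f y))) \<partial>lebesgue))"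

end

theory Submission
  imports Defs
begin

text \<open>
  For a dyadic cube Q put u_j = V_Q^(-1) e_j. As W^(-1/q) is Hermitian,
  |V_Q^(-1) W^(-1/q)(y) f(y)| <= sum_j |f(y)| |W^(-1/q)(y) u_j|, and the defining property of the
  reducing matrix V_Q says that the L^(p')-average of |W^(-1/q) u_j| over Q is at most |V_Q u_j| = 1.
  By Hoelder's inequality the averaging term of M'_(W,alpha) at Q is therefore at most
  n |Q|^(-1/q) (int_Q |f|^p)^(1/p), which reduces the matrix operator to a scalar fractional maximal
  function of |f|^p. Since q >= p, a cube on which this scalar quantity exceeds lambda satisfies
  |Q| <= (n/lambda)^q ||f||_p^(q-p) int_Q |f|^p; in particular these cubes have bounded size, so
  the maximal ones are disjoint and cover the level set, and summing over them gives
  |{M'_(W,alpha) f > lambda}| <= (n/lambda)^q ||f||_p^q. The spectral theorem for positive definite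
  matrices is needed only to know that W^(-1/q) is Hermitian.
\<close>

section \<open>The complex inner product and the spectral theorem\<close>

definition cinner :: "complex^'n \<Rightarrow> complex^'n \<Rightarrow> complex" where
  "cinner x y = (\<Sum>i\<in>UNIV. x$i * cnj (y$i))"

lemma cinner_add_left: "cinner (x + y) z = cinner x z + cinner y z"
  by (simp add: cinner_def distrib_right sum.distrib)

lemma cinner_add_right: "cinner x (y + z) = cinner x y + cinner x z"
  by (simp add: cinner_def distrib_left sum.distrib)

lemma cinner_diff_left: "cinner (x - y) z = cinner x z - cinner y z"
  by (simp add: cinner_def left_diff_distrib sum_subtractf)

lemma cinner_smult_left: "cinner (c *s x) y = c * cinner x y"
  by (simp add: cinner_def sum_distrib_left mult.assoc)

lemma vector_scaleR_component_complex: "(t *\<^sub>R (x::complex^'n)) $ i = of_real t * x $ i"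
  by (subst vector_scaleR_component) (simp add: scaleR_conv_of_real)

lemma cinner_scaleR_left: "cinner (t *\<^sub>R x) y = of_real t * cinner x y"
  unfolding cinner_def vector_scaleR_component_complex by (simp add: sum_distrib_left mult.assoc)

lemma cinner_scaleR_right: "cinner x (t *\<^sub>R y) = of_real t * cinner x y"
  unfolding cinner_def vector_scaleR_component_complex by (simp add: sum_distrib_left algebra_simps)

lemma cinner_sum_left: "cinner (\<Sum>i\<in>I. f i) y = (\<Sum>i\<in>I. cinner (f i) y)"
  by (simp add: cinner_def sum_distrib_right flip: sum.swap[of _ UNIV])

lemma cinner_zero_left [simp]: "cinner 0 y = 0"
  by (simp add: cinner_def)

lemma cinner_commute: "cinner y x = cnj (cinner x y)"
  by (simp add: cinner_def mult.commute)

lemma norm_axis_complex: "norm (axis j (1::complex) :: complex^'n) = 1"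
  by (rule norm_Basis) (auto simp: Basis_vec_def Basis_complex_def)

lemma cinner_self: "cinner x x = of_real ((norm x)\<^sup>2)"
proof -
  have "cinner x x = (\<Sum>i\<in>UNIV. complex_of_real ((norm (x$i))\<^sup>2))"
    unfolding cinner_def by (intro sum.cong refl) (metis complex_norm_square)
  also have "\<dots> = of_real ((norm x)\<^sup>2)"
    by (simp add: norm_vec_def L2_set_def sum_nonneg)
  finally show ?thesis .
qed

lemma cinner_cauchy_schwarz: "norm (cinner x y) \<le> norm x * norm y"
proof -
  have "norm (cinner x y) \<le> (\<Sum>i\<in>UNIV. norm (x$i) * norm (y$i))"
    unfolding cinner_def by (rule order_trans[OF norm_sum]) (simp add: norm_mult)
  also have "\<dots> = (\<chi> i. norm (x$i)) \<bullet> (\<chi> i. norm (y$i))"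
    by (simp add: inner_vec_def)
  also have "\<dots> \<le> norm (\<chi> i. norm (x$i)) * norm (\<chi> i. norm (y$i))"
    by (rule norm_cauchy_schwarz)
  also have "\<dots> = norm x * norm y"
    by (simp add: norm_vec_def)
  finally show ?thesis .
qed

lemma cadj_cadj [simp]: "cadj (cadj A) = A"
  by (simp add: cadj_def vec_eq_iff)

lemma cadj_mat_1 [simp]: "cadj (mat 1) = mat 1"
  by (simp add: cadj_def vec_eq_iff mat_def)

lemma cadj_mult: "cadj (A ** B) = cadj B ** cadj A"
  by (simp add: cadj_def vec_eq_iff matrix_matrix_mult_def mult.commute)

lemma cadj_cdiag [simp]: "cadj (cdiag lam) = cdiag lam"
  by (simp add: cadj_def cdiag_def vec_eq_iff)

lemma cinner_matrix_left: "cinner (A *v x) y = cinner x (cadj A *v y)"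
proof -
  have "cinner (A *v x) y = (\<Sum>i\<in>UNIV. \<Sum>j\<in>UNIV. A$i$j * x$j * cnj (y$i))"
    by (simp add: cinner_def matrix_vector_mult_def sum_distrib_right)
  also have "\<dots> = (\<Sum>j\<in>UNIV. \<Sum>i\<in>UNIV. A$i$j * x$j * cnj (y$i))"
    by (rule sum.swap)
  also have "\<dots> = cinner x (cadj A *v y)"
    by (simp add: cinner_def matrix_vector_mult_def cadj_def sum_distrib_left algebra_simps)
  finally show ?thesis .
qed

lemma hermitian_cinner: "hermitian A \<Longrightarrow> cinner (A *v x) y = cinner x (A *v y)"
  by (simp add: cinner_matrix_left hermitian_def)

lemma matrix_vector_component_cinner: "(A *v x) $ j = cinner x (cadj A *v axis j 1)"
  by (simp add: cinner_def matrix_vector_mult_def cadj_def axis_def mult.commute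
      if_distrib cong: if_cong)

lemma posdef_quadratic_form: "posdef A \<Longrightarrow> x \<noteq> 0 \<Longrightarrow> 0 < Re (cinner (A *v x) x)"
  unfolding posdef_def cinner_def matrix_vector_mult_def
  by (simp add: sum_distrib_left sum_distrib_right algebra_simps)

definition orthonormal_on :: "'i set \<Rightarrow> ('i \<Rightarrow> complex^'n) \<Rightarrow> bool" where
  "orthonormal_on I v \<longleftrightarrow> (\<forall>i\<in>I. \<forall>j\<in>I. cinner (v i) (v j) = (if i = j then 1 else 0))"

definition orthogonal_complement :: "(complex^'n) set \<Rightarrow> (complex^'n) set" where
  "orthogonal_complement B = {w. \<forall>b\<in>B. cinner w b = 0}"

lemma subspace_orthogonal_complement: "subspace (orthogonal_complement B)"
  by (simp add: subspace_def orthogonal_complement_def cinner_add_left cinner_scaleR_left)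

lemma orthogonal_complement_nontrivial:
  fixes v :: "'n \<Rightarrow> complex^'n"
  assumes "I \<noteq> UNIV" and "orthonormal_on I v"
  shows "orthogonal_complement (v ` I) \<noteq> {0}"
proof
  assume trivial: "orthogonal_complement (v ` I) = {0}"
  have "x \<in> vec.span (v ` I)" for x :: "complex^'n"
  proof -
    let ?r = "x - (\<Sum>i\<in>I. cinner x (v i) *s v i)"
    have "cinner ?r (v j) = 0" if "j \<in> I" for j
    proof -
      have "cinner (\<Sum>i\<in>I. cinner x (v i) *s v i) (v j)
          = (\<Sum>i\<in>I. if i = j then cinner x (v i) else 0)"
        unfolding cinner_sum_left cinner_smult_left using assms(2) that
        by (intro sum.cong) (auto simp: orthonormal_on_def)
      then show ?thesis
        using that by (simp add: cinner_diff_left)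
    qed
    then have "?r \<in> orthogonal_complement (v ` I)"
      by (auto simp: orthogonal_complement_def)
    then have "?r = 0"
      using trivial by blast
    then have "x = (\<Sum>i\<in>I. cinner x (v i) *s v i)"
      by simp
    also have "\<dots> \<in> vec.span (v ` I)"
      by (intro vec.span_sum vec.span_scale vec.span_base) auto
    finally show ?thesis .
  qed
  then have "vec.dim (UNIV :: (complex^'n) set) \<le> card (v ` I)"
    by (intro vec.dim_le_card) auto
  then have "CARD('n) \<le> card (v ` I)"
    unfolding vec_dim_card .
  also have "\<dots> \<le> card I"
    by (rule card_image_le) simp
  also have "\<dots> < CARD('n)"
    using assms(1) by (intro psubset_card_mono) auto
  finally show False by simp
qed

lemma nonpos_of_quadratic_perturbation:
  fixes a b :: real
  assumes "\<And>t. 0 < t \<Longrightarrow> a * t + b * t\<^sup>2 \<le> 0"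
  shows "a \<le> 0"
proof (rule ccontr)
  assume "\<not> a \<le> 0"
  define t where "t = a / (\<bar>b\<bar> + 1)"
  have t: "0 < t" "t * \<bar>b\<bar> < a"
    using \<open>\<not> a \<le> 0\<close> by (auto simp: t_def field_simps)
  have "0 < t * (a - t * \<bar>b\<bar>)"
    using t by simp
  also have "\<dots> \<le> a * t + b * t\<^sup>2"
  proof -
    have "- b * t\<^sup>2 \<le> \<bar>b\<bar> * t\<^sup>2"
      by (intro mult_right_mono) auto
    then show ?thesis
      by (simp add: power2_eq_square algebra_simps)
  qed
  finally show False
    using assms[OF t(1)] by simp
qed

lemma matrix_vector_mult_scaleR_complex:
  "(A::complex^'n^'m) *v (t *\<^sub>R x) = t *\<^sub>R (A *v x)"
  by (simp add: vec_eq_iff matrix_vector_mult_def vector_scaleR_component_complex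
      sum_distrib_left algebra_simps scaleR_sum_right)

lemma cinner_add_scaleR:
  "cinner (x + t *\<^sub>R y) (u + t *\<^sub>R v)
     = cinner x u + of_real t * (cinner x v + cinner y u) + of_real (t\<^sup>2) * cinner y v"
  by (simp add: cinner_add_left cinner_add_right cinner_scaleR_left cinner_scaleR_right
      power2_eq_square algebra_simps)

lemma hermitian_quadratic_form_add_scaleR:
  assumes "hermitian A"
  shows "Re (cinner (A *v (x + t *\<^sub>R y)) (x + t *\<^sub>R y))
     = Re (cinner (A *v x) x) + 2 * t * Re (cinner (A *v x) y) + t\<^sup>2 * Re (cinner (A *v y) y)"
proof -
  have "cinner (A *v y) x = cnj (cinner (A *v x) y)"
    using assms by (simp add: hermitian_cinner cinner_commute[of x])
  then show ?thesis
    by (simp add: matrix_vector_right_distrib matrix_vector_mult_scaleR_complex cinner_add_scaleR)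
qed

lemma norm_add_scaleR_sq:
  "(norm (x + t *\<^sub>R y))\<^sup>2 = (norm x)\<^sup>2 + 2 * t * Re (cinner x y) + t\<^sup>2 * (norm y)\<^sup>2"
proof -
  have "Re (cinner (x + t *\<^sub>R y) (x + t *\<^sub>R y))
      = Re (cinner x x) + 2 * t * Re (cinner x y) + t\<^sup>2 * Re (cinner y y)"
    by (simp add: cinner_add_scaleR cinner_commute[of x y])
  then show ?thesis
    by (simp add: cinner_self)
qed

lemma hermitian_Rayleigh_maximiser_eigenvector:
  fixes A :: "complex^'n^'n"
  assumes herm: "hermitian A" and S: "subspace S"
    and invariant: "\<And>w. w \<in> S \<Longrightarrow> A *v w \<in> S"
    and w0: "w0 \<in> S" "norm w0 = 1"
    and maximal: "\<And>y. y \<in> S \<Longrightarrow> Re (cinner (A *v y) y) \<le> Re (cinner (A *v w0) w0) * (norm y)\<^sup>2"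
  shows "A *v w0 = Re (cinner (A *v w0) w0) *\<^sub>R w0"
proof -
  let ?R = "\<lambda>w. Re (cinner (A *v w) w)"
  define \<mu> where "\<mu> = ?R w0"
  define r where "r = A *v w0 - \<mu> *\<^sub>R w0"
  have r: "r \<in> S"
    unfolding r_def using S w0(1) invariant by (intro subspace_diff subspace_scale) auto
  have residual: "Re (cinner (A *v w0) r) = (norm r)\<^sup>2 + \<mu> * Re (cinner w0 r)"
  proof -
    have "cinner r r = cinner (A *v w0) r - of_real \<mu> * cinner w0 r"
      by (subst (1) r_def) (simp add: cinner_diff_left cinner_scaleR_left)
    then have "Re (cinner r r) = Re (cinner (A *v w0) r) - \<mu> * Re (cinner w0 r)"
      by simp
    then show ?thesis
      by (simp add: cinner_self)
  qed
  \<comment> \<open>Perturbing the maximiser in the direction \<open>r\<close> cannot increase the Rayleigh quotient.\<close>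
  have "2 * (norm r)\<^sup>2 \<le> 0"
  proof (rule nonpos_of_quadratic_perturbation)
    fix t :: real
    have arith: "\<mu> + 2 * t * (n + \<mu> * P) + t\<^sup>2 * R \<le> \<mu> * (1\<^sup>2 + 2 * t * P + t\<^sup>2 * n)
        \<Longrightarrow> 2 * n * t + (R - \<mu> * n) * t\<^sup>2 \<le> 0" for n P R :: real
      by (simp add: ring_distribs mult_ac)
    have "?R (w0 + t *\<^sub>R r) \<le> \<mu> * (norm (w0 + t *\<^sub>R r))\<^sup>2"
      unfolding \<mu>_def using S r w0 by (intro maximal subspace_add subspace_scale)
    then show "2 * (norm r)\<^sup>2 * t + (?R r - \<mu> * (norm r)\<^sup>2) * t\<^sup>2 \<le> 0"
      unfolding hermitian_quadratic_form_add_scaleR[OF herm] norm_add_scaleR_sq residual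
        \<mu>_def[symmetric] w0(2)
      by (rule arith)
  qed
  then show ?thesis
    by (simp add: r_def \<mu>_def)
qed

lemma hermitian_invariant_subspace_eigenvector:
  fixes A :: "complex^'n^'n"
  assumes herm: "hermitian A" and S: "subspace S"
    and invariant: "\<And>w. w \<in> S \<Longrightarrow> A *v w \<in> S" and nontrivial: "S \<noteq> {0}"
  shows "\<exists>w\<in>S. norm w = 1 \<and> (\<exists>\<mu>. A *v w = \<mu> *\<^sub>R w)"
proof -
  let ?R = "\<lambda>w. Re (cinner (A *v w) w)"
  from nontrivial S obtain w where "w \<in> S" "w \<noteq> 0"
    by (auto simp: subspace_def)
  then have "(1 / norm w) *\<^sub>R w \<in> S \<inter> sphere 0 1"
    using S by (simp add: subspace_scale)
  moreover have "compact (S \<inter> sphere 0 1)"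
    using closed_subspace[OF S] by (intro closed_Int_compact compact_sphere)
  moreover have "continuous_on (S \<inter> sphere 0 1) ?R"
    unfolding cinner_def matrix_vector_mult_def by (intro continuous_intros)
  ultimately obtain w0 where "w0 \<in> S \<inter> sphere 0 1" "\<forall>y\<in>S \<inter> sphere 0 1. ?R y \<le> ?R w0"
    using continuous_attains_sup[of "S \<inter> sphere 0 1" ?R] by blast
  then have w0: "w0 \<in> S" "norm w0 = 1"
    and max: "\<And>y. y \<in> S \<Longrightarrow> norm y = 1 \<Longrightarrow> ?R y \<le> ?R w0"
    by auto
  have "?R y \<le> ?R w0 * (norm y)\<^sup>2" if "y \<in> S" for y
  proof (cases "y = 0")
    case False
    have "(1 / norm y)\<^sup>2 * ?R y = ?R ((1 / norm y) *\<^sub>R y)"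
      by (simp add: matrix_vector_mult_scaleR_complex cinner_scaleR_left cinner_scaleR_right
          power2_eq_square)
    also have "\<dots> \<le> ?R w0"
      using that False S by (intro max) (auto simp: subspace_scale)
    finally show ?thesis
      using False by (simp add: power_divide field_simps)
  qed simp
  then show ?thesis
    using hermitian_Rayleigh_maximiser_eigenvector[OF herm S invariant w0] w0 by blast
qed

lemma hermitian_orthonormal_eigenvectors:
  fixes A :: "complex^'n^'n" and I :: "'n set"
  assumes herm: "hermitian A"
  shows "\<exists>v \<mu>. orthonormal_on I v \<and> (\<forall>i\<in>I. A *v v i = \<mu> i *\<^sub>R v i)"
proof (induction I rule: infinite_finite_induct)
  case (insert j I)
  then obtain v \<mu> where orth: "orthonormal_on I v" and eig: "\<forall>i\<in>I. A *v v i = \<mu> i *\<^sub>R v i"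
    by blast
  let ?S = "orthogonal_complement (v ` I)"
  have "A *v w \<in> ?S" if "w \<in> ?S" for w
    using that eig
    by (simp add: orthogonal_complement_def hermitian_cinner[OF herm] cinner_scaleR_right)
  moreover have "?S \<noteq> {0}"
    using insert.hyps orth by (intro orthogonal_complement_nontrivial) auto
  ultimately obtain w \<nu> where w: "w \<in> ?S" "norm w = 1" "A *v w = \<nu> *\<^sub>R w"
    using hermitian_invariant_subspace_eigenvector[OF herm subspace_orthogonal_complement] by blast
  have "cinner w (v i) = 0" "cinner (v i) w = 0" if "i \<in> I" for i
    using w(1) that cinner_commute[of w "v i"] by (auto simp: orthogonal_complement_def)
  moreover have "cinner w w = 1"
    using w(2) by (simp add: cinner_self)
  ultimately have "orthonormal_on (insert j I) (v(j := w))"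
    using orth insert.hyps by (auto simp: orthonormal_on_def)
  moreover have "\<forall>i\<in>insert j I. A *v (v(j := w)) i = (\<mu>(j := \<nu>)) i *\<^sub>R (v(j := w)) i"
    using eig w(3) insert.hyps by auto
  ultimately show ?case
    by blast
qed (auto simp: orthonormal_on_def)

lemma posdef_spectral_decomposition:
  fixes A :: "complex^'n^'n"
  assumes "posdef A"
  shows "\<exists>U lam. unitary U \<and> (\<forall>i. 0 < lam i) \<and> A = U ** cdiag lam ** cadj U"
proof -
  obtain v :: "'n \<Rightarrow> complex^'n" and \<mu> where orth: "orthonormal_on UNIV v"
    and eig: "\<And>i. A *v v i = \<mu> i *\<^sub>R v i"
    using hermitian_orthonormal_eigenvectors[of A UNIV] assms by (auto simp: posdef_def)
  define U :: "complex^'n^'n" where "U = (\<chi> r c. v c $ r)"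
  have "(cadj U ** U) $ i $ j = cinner (v j) (v i)" for i j
    by (simp add: U_def cadj_def matrix_matrix_mult_def cinner_def mult.commute)
  then have UU: "cadj U ** U = mat 1"
    using orth by (simp add: orthonormal_on_def vec_eq_iff mat_def)
  then have "unitary U"
    unfolding unitary_def using matrix_left_right_inverse by blast
  have AU: "A ** U = U ** cdiag \<mu>"
  proof -
    have "(A ** U) $ r $ c = (A *v v c) $ r" for r c
      by (simp add: U_def matrix_matrix_mult_def matrix_vector_mult_def)
    moreover have "(U ** cdiag \<mu>) $ r $ c = (\<mu> c *\<^sub>R v c) $ r" for r c
      unfolding vector_scaleR_component_complex
      by (simp add: U_def cdiag_def matrix_matrix_mult_def if_distrib mult.commute cong: if_cong)
    ultimately show ?thesis
      using eig by (simp add: vec_eq_iff)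
  qed
  have "A = A ** (U ** cadj U)"
    using \<open>unitary U\<close> by (simp add: unitary_def)
  also have "\<dots> = U ** cdiag \<mu> ** cadj U"
    by (simp add: matrix_mul_assoc AU)
  finally have "A = U ** cdiag \<mu> ** cadj U" .
  moreover have "0 < \<mu> i" for i
  proof -
    have "cinner (v i) (v i) = 1"
      using orth by (simp add: orthonormal_on_def)
    then have "v i \<noteq> 0"
      by auto
    then have "0 < Re (cinner (A *v v i) (v i))"
      by (rule posdef_quadratic_form[OF assms])
    also have "cinner (A *v v i) (v i) = of_real (\<mu> i)"
      using orth by (simp add: eig cinner_scaleR_left orthonormal_on_def)
    finally show ?thesis
      by simp
  qed
  ultimately show ?thesis
    using \<open>unitary U\<close> by blast
qed

lemma mpow_hermitian:
  assumes "posdef A"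
  shows "hermitian (mpow A s)"
proof -
  let ?P = "\<lambda>B. \<exists>U lam. unitary U \<and> (\<forall>i. 0 < lam i) \<and>
       A = U ** cdiag lam ** cadj U \<and> B = U ** cdiag (\<lambda>i. lam i powr s) ** cadj U"
  have "\<exists>B. ?P B"
    using posdef_spectral_decomposition[OF assms] by blast
  then have "?P (mpow A s)"
    unfolding mpow_def by (rule someI_ex)
  then obtain U lam where "mpow A s = U ** cdiag (\<lambda>i. lam i powr s) ** cadj U"
    by blast
  then show ?thesis
    by (simp add: hermitian_def cadj_mult matrix_mul_assoc)
qed

lemma posdef_matrix_inv_left:
  assumes "posdef (V::complex^'n^'n)"
  shows "matrix_inv V ** V = mat 1"
proof -
  have "x = 0" if "V *v x = 0" for x
    using posdef_quadratic_form[OF assms, of x] that by auto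
  then obtain B where left: "B ** V = mat 1"
    using matrix_left_invertible_ker[of V] by blast
  then have "V ** B = mat 1"
    by (subst matrix_left_right_inverse)
  with left have "\<exists>A'. V ** A' = mat 1 \<and> A' ** V = mat 1"
    by blast
  then show ?thesis
    unfolding matrix_inv_def by (rule someI2_ex) simp
qed

section \<open>Dyadic cubes\<close>

lemma cube_box_cbox:
  "box a (\<chi> i. a $ i + l) \<subseteq> cube a l" "cube a l \<subseteq> cbox a (\<chi> i. a $ i + l)"
  by (auto simp: cube_def mem_box_cart less_imp_le)

lemma
  fixes a :: "real^'d"
  assumes "0 < l"
  shows cube_lmeasurable: "cube a l \<in> lmeasurable"
    and measure_cube: "measure lebesgue (cube a l) = l ^ CARD('d)"
    and interior_cube_nonempty: "interior (cube a l) \<noteq> {}"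
proof -
  define b where "b = (\<chi> i. a $ i + l)"
  have box: "box a b \<subseteq> cube a l" "cube a l \<subseteq> cbox a b"
    using cube_box_cbox unfolding b_def by blast+
  have null: "negligible (cbox a b - cube a l \<union> (cube a l - cbox a b))"
    by (rule negligible_subset[OF negligible_frontier_interval[of a b]]) (use box in blast)
  show "cube a l \<in> lmeasurable"
    by (rule lmeasurable_negligible_symdiff[OF lmeasurable_cbox null])
  have "measure lebesgue (cube a l) = Henstock_Kurzweil_Integration.content (cbox a b)"
    using measure_negligible_symdiff[OF lmeasurable_cbox null] by simp
  also have "\<dots> = l ^ CARD('d)"
    using assms by (simp add: content_cbox_cart b_def interval_ne_empty_cart)
  finally show "measure lebesgue (cube a l) = l ^ CARD('d)" .
  have "box a b \<subseteq> interior (cube a l)"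
    using box(1) by (intro interior_maximal) auto
  moreover have "box a b \<noteq> {}"
    using assms by (simp add: interval_ne_empty_cart b_def)
  ultimately show "interior (cube a l) \<noteq> {}"
    by blast
qed

lemma dyadic_grid_cube:
  assumes "dyadic_grid D" "Q \<in> D"
  obtains a and k :: int where "Q = cube a (2 powr k)"
  using assms(1)[unfolded dyadic_grid_def, THEN conjunct1] assms(2) that by blast

lemma dyadic_grid_generation_disjoint:
  fixes k :: int
  assumes "dyadic_grid D"
  shows "disjoint {Q\<in>D. \<exists>a. Q = cube a (2 powr k)}"
  using assms[unfolded dyadic_grid_def, THEN conjunct2, THEN conjunct1] by blast

lemma dyadic_grid_nested:
  assumes "dyadic_grid D" "Q \<in> D" "R \<in> D"
  shows "Q \<inter> R = {} \<or> Q \<subseteq> R \<or> R \<subseteq> Q"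
  using assms(1)[unfolded dyadic_grid_def, THEN conjunct2, THEN conjunct2] assms(2,3) by blast

lemma
  fixes D :: "(real^'d) set set"
  assumes "dyadic_grid D" "Q \<in> D"
  shows dyadic_cube_lmeasurable: "Q \<in> lmeasurable"
    and dyadic_cube_measure_pos: "0 < measure lebesgue Q"
    and dyadic_cube_interior_nonempty: "interior Q \<noteq> {}"
    and dyadic_cube_measure: "\<exists>k::int. measure lebesgue Q = 2 powr (real_of_int k * real CARD('d))"
proof -
  obtain a and k :: int where Q: "Q = cube a (2 powr k)"
    using dyadic_grid_cube[OF assms] .
  show "Q \<in> lmeasurable" "interior Q \<noteq> {}"
    unfolding Q by (simp_all add: cube_lmeasurable interior_cube_nonempty)
  have "measure lebesgue Q = (2 powr k) ^ CARD('d)"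
    unfolding Q by (simp add: measure_cube)
  also have "\<dots> = 2 powr (real_of_int k * real CARD('d))"
    by (simp add: powr_realpow[symmetric] powr_powr)
  finally show "0 < measure lebesgue Q"
    "\<exists>k::int. measure lebesgue Q = 2 powr (real_of_int k * real CARD('d))"
    by auto
qed

lemma dyadic_cubes_eq_of_measure_eq:
  fixes D :: "(real^'d) set set"
  assumes D: "dyadic_grid D" and "Q \<in> D" "R \<in> D" "x \<in> Q" "x \<in> R"
    and measure: "measure lebesgue Q = measure lebesgue R"
  shows "Q = R"
proof -
  obtain a and k :: int where Q: "Q = cube a (2 powr k)"
    using dyadic_grid_cube[OF D \<open>Q \<in> D\<close>] .
  obtain b and j :: int where R: "R = cube b (2 powr j)"
    using dyadic_grid_cube[OF D \<open>R \<in> D\<close>] .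
  have "(2 powr k) ^ CARD('d) = (2 powr j) ^ CARD('d)"
    using measure by (simp add: Q R measure_cube)
  then have "2 powr k = 2 powr j"
    by (rule power_eq_imp_eq_base) auto
  then have "k = j"
    using powr_inj[of 2 k j] by simp
  then have "Q \<in> {Q\<in>D. \<exists>a. Q = cube a (2 powr k)}" "R \<in> {Q\<in>D. \<exists>a. Q = cube a (2 powr k)}"
    using Q R assms(2,3) by auto
  then show "Q = R"
    using dyadic_grid_generation_disjoint[OF D, of k] assms(4,5)
    unfolding pairwise_def disjnt_def by blast
qed

lemma finite_int_powr_between:
  fixes d m B :: real
  assumes "0 < d" "0 < m"
  shows "finite {k::int. m \<le> 2 powr (real_of_int k * d) \<and> 2 powr (real_of_int k * d) \<le> B}"
proof (rule finite_subset)
  show "{k::int. m \<le> 2 powr (real_of_int k * d) \<and> 2 powr (real_of_int k * d) \<le> B}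
      \<subseteq> {\<lfloor>log 2 m / d\<rfloor>..\<lceil>log 2 B / d\<rceil>}"
  proof
    fix k :: int
    assume "k \<in> {k. m \<le> 2 powr (real_of_int k * d) \<and> 2 powr (real_of_int k * d) \<le> B}"
    then have "log 2 m \<le> real_of_int k * d" "real_of_int k * d \<le> log 2 B"
      using assms by (simp_all add: log_le_iff le_log_iff)
    then have "log 2 m / d \<le> k" "k \<le> log 2 B / d"
      using assms(1) by (simp_all add: divide_le_eq le_divide_eq)
    then show "k \<in> {\<lfloor>log 2 m / d\<rfloor>..\<lceil>log 2 B / d\<rceil>}"
      by simp linarith
  qed
qed simp

lemma dyadic_ancestors_finite:
  fixes D :: "(real^'d) set set"
  assumes D: "dyadic_grid D" and "Q \<in> D"
  shows "finite {R\<in>D. Q \<subseteq> R \<and> measure lebesgue R \<le> B}"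
proof -
  let ?A = "{R\<in>D. Q \<subseteq> R \<and> measure lebesgue R \<le> B}"
  let ?m = "\<lambda>k::int. 2 powr (real_of_int k * real CARD('d))"
  obtain x where "x \<in> Q"
    using dyadic_cube_interior_nonempty[OF assms] interior_subset by blast
  then have inj: "inj_on (measure lebesgue) ?A"
    using dyadic_cubes_eq_of_measure_eq[OF D] by (intro inj_onI) blast
  have "measure lebesgue ` ?A
      \<subseteq> ?m ` {k. measure lebesgue Q \<le> ?m k \<and> ?m k \<le> B}"
  proof safe
    fix R assume R: "R \<in> D" "Q \<subseteq> R" "measure lebesgue R \<le> B"
    obtain k :: int where k: "measure lebesgue R = ?m k"
      using dyadic_cube_measure[OF D R(1)] by blast
    have "measure lebesgue Q \<le> measure lebesgue R"
      using measure_mono_fmeasurable[OF R(2) fmeasurableD dyadic_cube_lmeasurable[OF D R(1)]]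
        dyadic_cube_lmeasurable[OF D assms(2)] by blast
    then show "measure lebesgue R \<in> ?m ` {k. measure lebesgue Q \<le> ?m k \<and> ?m k \<le> B}"
      using R(3) k by auto
  qed
  moreover have "finite {k. measure lebesgue Q \<le> ?m k \<and> ?m k \<le> B}"
    using dyadic_cube_measure_pos[OF assms] by (intro finite_int_powr_between) auto
  ultimately have "finite (measure lebesgue ` ?A)"
    by (rule finite_subset[OF _ finite_imageI])
  then show ?thesis
    using inj by (simp add: finite_image_iff)
qed

lemma dyadic_maximal_subfamily:
  fixes D :: "(real^'d) set set"
  assumes D: "dyadic_grid D" and "G \<subseteq> D" and bounded: "\<And>Q. Q \<in> G \<Longrightarrow> measure lebesgue Q \<le> B"
  shows "\<exists>G'\<subseteq>G. \<Union>G' = \<Union>G \<and> disjoint G' \<and> countable G'"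
proof -
  define G' where "G' = {R\<in>G. \<forall>R'\<in>G. R \<subseteq> R' \<longrightarrow> R' = R}"
  have "G' \<subseteq> G"
    by (auto simp: G'_def)
  have "x \<in> \<Union>G'" if "x \<in> Q" "Q \<in> G" for x Q
  proof -
    let ?S = "{R\<in>G. Q \<subseteq> R}"
    have "?S \<subseteq> {R\<in>D. Q \<subseteq> R \<and> measure lebesgue R \<le> B}"
      using assms(2) bounded by auto
    moreover have "Q \<in> D"
      using that(2) assms(2) by blast
    ultimately have "finite ?S"
      by (blast intro: finite_subset dyadic_ancestors_finite[OF D])
    moreover have "?S \<noteq> {}"
      using that(2) by blast
    ultimately have "\<exists>R\<in>?S. \<forall>R'\<in>?S. R \<le> R' \<longrightarrow> R = R'"
      by (rule finite_has_maximal)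
    then obtain R where R: "R \<in> ?S" and maximal: "\<forall>R'\<in>?S. R \<le> R' \<longrightarrow> R = R'" ..
    have "R \<in> G'"
      unfolding G'_def using R maximal by auto
    then show "x \<in> \<Union>G'"
      using R(1) that(1) by blast
  qed
  with \<open>G' \<subseteq> G\<close> have "\<Union>G' = \<Union>G"
    by blast
  moreover have "disjoint G'"
  proof (rule pairwiseI)
    fix Q R assume "Q \<in> G'" "R \<in> G'" "Q \<noteq> R"
    moreover have "Q \<inter> R = {} \<or> Q \<subseteq> R \<or> R \<subseteq> Q"
      using \<open>Q \<in> G'\<close> \<open>R \<in> G'\<close> \<open>G' \<subseteq> G\<close> assms(2) by (intro dyadic_grid_nested[OF D]) auto
    ultimately show "disjnt Q R"
      unfolding G'_def disjnt_def by blast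
  qed
  moreover have "countable G'"
    using \<open>disjoint G'\<close> \<open>G' \<subseteq> G\<close> dyadic_cube_interior_nonempty[OF D] assms(2)
    by (intro countable_disjoint_nonempty_interior_subsets) auto
  ultimately show ?thesis
    using \<open>G' \<subseteq> G\<close> by blast
qed

section \<open>Integral estimates\<close>

lemma set_integral_nonneg:
  fixes g :: "'a \<Rightarrow> real"
  assumes "\<And>x. 0 \<le> g x"
  shows "0 \<le> (LINT x:A|M. g x)"
  unfolding set_lebesgue_integral_def using assms
  by (intro integral_nonneg_AE AE_I2) (simp add: indicator_def)

lemma set_integral_le_integral:
  fixes g :: "'a \<Rightarrow> real"
  assumes "integrable M g" "\<And>x. 0 \<le> g x" "A \<in> sets M"
  shows "(LINT x:A|M. g x) \<le> (LINT x|M. g x)"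
  unfolding set_lebesgue_integral_def using assms
  by (intro integral_mono[OF integrable_mult_indicator[OF assms(3,1)] assms(1)])
    (simp add: indicator_def)

lemma emeasure_disjoint_Union_le_integral:
  fixes g :: "'a \<Rightarrow> real"
  assumes G: "countable G" "disjoint G" "G \<subseteq> sets M"
    and g: "integrable M g" "\<And>x. 0 \<le> g x" and K: "0 \<le> K"
    and le: "\<And>Q. Q \<in> G \<Longrightarrow> emeasure M Q \<le> ennreal (K * (LINT x:Q|M. g x))"
  shows "emeasure M (\<Union>G) \<le> ennreal (K * (LINT x|M. g x))"
proof -
  let ?\<nu> = "density M (\<lambda>x. ennreal (g x))"
  have g_measurable: "(\<lambda>x. ennreal (g x)) \<in> borel_measurable M"
    using g(1) by auto
  have \<nu>: "emeasure ?\<nu> A = ennreal (LINT x:A|M. g x)" if "A \<in> sets M" for A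
  proof -
    have "emeasure ?\<nu> A = (\<integral>\<^sup>+x\<in>A. ennreal (g x) \<partial>M)"
      by (rule emeasure_density[OF g_measurable that])
    also have "\<dots> = ennreal (LINT x:A|M. g x)"
      using g that by (intro nn_set_integral_eq_set_integral) auto
    finally show ?thesis .
  qed
  have disjoint_family: "disjoint_family_on id G"
    using G(2) by (auto simp: disjoint_family_on_def pairwise_def disjnt_def)
  have sets: "Q \<in> sets M" if "Q \<in> G" for Q
    using G(3) that by blast
  have "emeasure M (\<Union>G) = (\<integral>\<^sup>+Q. emeasure M Q \<partial>count_space G)"
    using emeasure_UN_countable[of G id M, OF sets G(1) disjoint_family] by simp
  also have "\<dots> \<le> (\<integral>\<^sup>+Q. ennreal K * emeasure ?\<nu> Q \<partial>count_space G)"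
  proof (rule nn_integral_mono)
    fix Q assume "Q \<in> space (count_space G)"
    then have "Q \<in> G" "Q \<in> sets M"
      using G(3) by auto
    moreover have "0 \<le> (LINT x:Q|M. g x)"
      using g(2) by (rule set_integral_nonneg)
    ultimately show "emeasure M Q \<le> ennreal K * emeasure ?\<nu> Q"
      using le[of Q] K \<nu>[of Q] by (simp add: ennreal_mult)
  qed
  also have "\<dots> = ennreal K * emeasure ?\<nu> (\<Union>G)"
    using emeasure_UN_countable[of G id ?\<nu>, OF _ G(1) disjoint_family] sets
    by (simp add: nn_integral_cmult)
  also have "\<dots> \<le> ennreal K * emeasure ?\<nu> (space M)"
    using G(3) sets.sets_into_space by (intro mult_left_mono emeasure_mono) auto
  also have "emeasure ?\<nu> (space M) = ennreal (LINT x|M. g x)"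
    using \<nu>[of "space M"] g(1) by (simp add: set_integral_space)
  finally show ?thesis
    using K g(2) by (simp add: ennreal_mult)
qed

lemma Youngs_inequality_scaled:
  fixes x y a b :: real
  assumes "1 < p" "1 < q" "1/p + 1/q = 1" "0 \<le> x" "0 \<le> y" "0 < a" "0 < b"
  shows "x * y \<le> a * b * (x powr p / (p * a powr p) + y powr q / (q * b powr q))"
proof -
  have "(x / a) * (y / b) \<le> (x / a) powr p / p + (y / b) powr q / q"
    using assms by (intro Youngs_inequality) auto
  also have "\<dots> = x powr p / (p * a powr p) + y powr q / (q * b powr q)"
    using assms by (simp add: powr_divide ac_simps)
  finally show ?thesis
    using assms(6,7) by (simp add: field_simps)
qed

lemma nn_integral_mult_le_Holder:
  fixes g h :: "'a \<Rightarrow> real"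
  assumes exponents: "1 < p" "1 < q" "1/p + 1/q = 1"
    and nonneg: "\<And>x. 0 \<le> g x" "\<And>x. 0 \<le> h x"
    and integrable: "integrable M (\<lambda>x. g x powr p)" "integrable M (\<lambda>x. h x powr q)"
  shows "(\<integral>\<^sup>+x. ennreal (g x * h x) \<partial>M)
    \<le> ennreal ((LINT x|M. g x powr p) powr (1/p) * (LINT x|M. h x powr q) powr (1/q))"
proof -
  define A where "A = (LINT x|M. g x powr p)"
  define B where "B = (LINT x|M. h x powr q)"
  have "0 \<le> A" "0 \<le> B"
    unfolding A_def B_def by (simp_all add: integral_nonneg_AE)
  have vanishing: "(\<integral>\<^sup>+x. ennreal (g x * h x) \<partial>M) = 0"
    if "AE x in M. g x * h x = 0"
  proof -
    have "(\<integral>\<^sup>+x. ennreal (g x * h x) \<partial>M) = (\<integral>\<^sup>+x. 0 \<partial>M)"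
      using that by (intro nn_integral_cong_AE) auto
    then show ?thesis
      by simp
  qed
  consider "A = 0" | "B = 0" | "0 < A" "0 < B"
    using \<open>0 \<le> A\<close> \<open>0 \<le> B\<close> by linarith
  then show ?thesis
  proof cases
    case 1
    then have "AE x in M. g x powr p = 0"
      using integrable(1) by (simp add: A_def integral_nonneg_eq_0_iff_AE)
    then show ?thesis
      by (subst vanishing) (auto elim!: eventually_mono)
  next
    case 2
    then have "AE x in M. h x powr q = 0"
      using integrable(2) by (simp add: B_def integral_nonneg_eq_0_iff_AE)
    then show ?thesis
      by (subst vanishing) (auto elim!: eventually_mono)
  next
    case 3
    define a where "a = A powr (1/p)"
    define b where "b = B powr (1/q)"
    have "0 < a" "0 < b" "a powr p = A" "b powr q = B"
      using 3 exponents by (simp_all add: a_def b_def powr_powr)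
    define \<phi> where "\<phi> x = a * b * (g x powr p / (p * A) + h x powr q / (q * B))" for x
    have pointwise: "g x * h x \<le> \<phi> x" for x
      using Youngs_inequality_scaled[OF exponents nonneg \<open>0 < a\<close> \<open>0 < b\<close>]
      by (simp add: \<phi>_def \<open>a powr p = A\<close> \<open>b powr q = B\<close>)
    have "0 \<le> \<phi> x" for x
      using mult_nonneg_nonneg[OF nonneg] pointwise by (rule order_trans)
    have "integrable M \<phi>"
      unfolding \<phi>_def using integrable by auto
    have "(\<integral>\<^sup>+x. ennreal (g x * h x) \<partial>M) \<le> (\<integral>\<^sup>+x. ennreal (\<phi> x) \<partial>M)"
      using pointwise by (intro nn_integral_mono ennreal_leI)
    also have "\<dots> = ennreal (LINT x|M. \<phi> x)"
      using \<open>integrable M \<phi>\<close> \<open>\<And>x. 0 \<le> \<phi> x\<close> by (intro nn_integral_eq_integral) auto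
    also have "(LINT x|M. \<phi> x) = a * b * (A / (p * A) + B / (q * B))"
      unfolding \<phi>_def using integrable by (simp add: A_def B_def)
    also have "\<dots> = a * b"
      using 3 exponents(3) by (simp add: field_simps)
    finally show ?thesis
      by (simp add: a_def b_def A_def B_def)
  qed
qed

section \<open>Reducing matrices\<close>

text \<open>
  The paper's reducing matrix V_Q is \<open>reducing_matrix (\<lambda>y. mpow (W y) (- 1 / q)) p' Q V\<close>.
\<close>

definition reducing_matrix ::
  "(real^'d \<Rightarrow> complex^'n^'n) \<Rightarrow> real \<Rightarrow> (real^'d) set \<Rightarrow> complex^'n^'n \<Rightarrow> bool" where
  "reducing_matrix M r Q V \<longleftrightarrow> posdef V \<and>
     (\<forall>e. (1 / measure lebesgue Q * (LINT y:Q|lebesgue. norm (M y *v e) powr r)) powr (1 / r)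
            \<le> norm (V *v e) \<and>
          norm (V *v e) \<le> sqrt (real CARD('n)) *
            (1 / measure lebesgue Q * (LINT y:Q|lebesgue. norm (M y *v e) powr r)) powr (1 / r))"

lemma reducing_matrix_unit_vector:
  fixes M :: "real^'d \<Rightarrow> complex^'n^'n"
  assumes V: "reducing_matrix M r Q V" and "0 < r" "0 < measure lebesgue Q"
    and e: "norm (V *v e) = 1"
  shows "set_integrable lebesgue Q (\<lambda>y. norm (M y *v e) powr r)"
    and "(LINT y:Q|lebesgue. norm (M y *v e) powr r) \<le> measure lebesgue Q"
proof -
  let ?I = "LINT y:Q|lebesgue. norm (M y *v e) powr r"
  let ?avg = "1 / measure lebesgue Q * ?I"
  have "?avg powr (1 / r) \<le> norm (V *v e) \<and> norm (V *v e) \<le> sqrt (real CARD('n)) * ?avg powr (1 / r)"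
    using V unfolding reducing_matrix_def by blast
  then have lower: "?avg powr (1 / r) \<le> 1" and upper: "1 \<le> sqrt (real CARD('n)) * ?avg powr (1 / r)"
    using e by simp_all
  \<comment> \<open>A set integral that does not exist is \<open>0\<close>, which the upper bound rules out.\<close>
  show "set_integrable lebesgue Q (\<lambda>y. norm (M y *v e) powr r)"
  proof (rule ccontr)
    assume "\<not> set_integrable lebesgue Q (\<lambda>y. norm (M y *v e) powr r)"
    then have "?I = 0"
      by (simp add: set_integrable_def set_lebesgue_integral_def not_integrable_integral_eq)
    with upper show False
      by simp
  qed
  have "?avg \<le> 1"
  proof (rule ccontr)
    assume "\<not> ?avg \<le> 1"
    then have "1 < ?avg powr (1 / r)"
      using \<open>0 < r\<close> by (intro gr_one_powr) auto
    with lower show False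
      by simp
  qed
  then show "?I \<le> measure lebesgue Q"
    using \<open>0 < measure lebesgue Q\<close> by (simp add: field_simps)
qed

lemma norm_reduced_le_sum_columns:
  fixes M R :: "complex^'n^'n"
  assumes "hermitian M"
  shows "norm (R *v (M *v f)) \<le> (\<Sum>j\<in>UNIV. norm f * norm (M *v (cadj R *v axis j 1)))"
proof -
  have "norm (R *v (M *v f)) \<le> (\<Sum>j\<in>UNIV. norm ((R *v (M *v f)) $ j))"
    unfolding norm_vec_def by (rule L2_set_le_sum) auto
  also have "\<dots> \<le> (\<Sum>j\<in>UNIV. norm f * norm (M *v (cadj R *v axis j 1)))"
  proof (rule sum_mono)
    fix j
    have "(R *v (M *v f)) $ j = cinner f (M *v (cadj R *v axis j 1))"
      by (simp add: matrix_vector_component_cinner hermitian_cinner[OF assms])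
    then show "norm ((R *v (M *v f)) $ j) \<le> norm f * norm (M *v (cadj R *v axis j 1))"
      using cinner_cauchy_schwarz by metis
  qed
  finally show ?thesis .
qed

lemma posdef_inverse_adjoint_column:
  assumes "posdef V"
  shows "V *v (cadj (matrix_inv V) *v axis j 1) = axis j 1"
proof -
  have "V *v (cadj (matrix_inv V) *v axis j 1) = cadj (matrix_inv V ** V) *v axis j 1"
    using assms by (simp add: posdef_def cadj_mult hermitian_def matrix_vector_mul_assoc)
  then show ?thesis
    using assms by (simp add: posdef_matrix_inv_left)
qed

lemma reducing_matrix_Holder:
  fixes M :: "real^'d \<Rightarrow> complex^'n^'n" and f :: "real^'d \<Rightarrow> complex^'n"
  assumes exponents: "1 < p" "1 < p'" "1/p + 1/p' = 1"
    and Q: "Q \<in> sets lebesgue" "0 < measure lebesgue Q"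
    and V: "reducing_matrix M p' Q V" and u: "norm (V *v u) = 1"
    and f: "f \<in> borel_measurable lebesgue" "integrable lebesgue (\<lambda>x. norm (f x) powr p)"
  shows "(\<lambda>y. ennreal (indicator Q y * (norm (f y) * norm (M y *v u)))) \<in> borel_measurable lebesgue"
    and "(\<integral>\<^sup>+y. ennreal (indicator Q y * (norm (f y) * norm (M y *v u))) \<partial>lebesgue)
      \<le> ennreal ((LINT y:Q|lebesgue. norm (f y) powr p) powr (1/p) * measure lebesgue Q powr (1/p'))"
proof -
  define g where "g y = norm (f y) * indicator Q y" for y
  define h where "h y = norm (M y *v u) * indicator Q y" for y
  have gh: "indicator Q y * (norm (f y) * norm (M y *v u)) = g y * h y" for y
    by (simp add: g_def h_def indicator_def)
  have g_powr: "g y powr p = indicator Q y * norm (f y) powr p" for y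
    using exponents by (simp add: g_def indicator_def)
  have h_powr: "h y powr p' = indicator Q y *\<^sub>R norm (M y *v u) powr p'" for y
    using exponents by (simp add: h_def indicator_def)
  have g_integrable: "integrable lebesgue (\<lambda>y. g y powr p)"
    unfolding g_powr using integrable_mult_indicator[OF Q(1) f(2)] by simp
  have h_integrable: "integrable lebesgue (\<lambda>y. h y powr p')"
    using reducing_matrix_unit_vector(1)[OF V _ Q(2) u] exponents
    by (simp add: h_powr set_integrable_def)
  have "(\<lambda>y. (h y powr p') powr (1 / p')) \<in> borel_measurable lebesgue"
    using h_integrable by measurable
  moreover have "(\<lambda>y. (h y powr p') powr (1 / p')) = h"
    using exponents by (simp add: powr_powr h_def fun_eq_iff)
  ultimately have "h \<in> borel_measurable lebesgue"
    by simp
  then show "(\<lambda>y. ennreal (indicator Q y * (norm (f y) * norm (M y *v u)))) \<in> borel_measurable lebesgue"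
    using f(1) Q(1) unfolding gh g_def by measurable
  have "(\<integral>\<^sup>+y. ennreal (g y * h y) \<partial>lebesgue)
      \<le> ennreal ((LINT y|lebesgue. g y powr p) powr (1/p) * (LINT y|lebesgue. h y powr p') powr (1/p'))"
    using exponents g_integrable h_integrable
    by (intro nn_integral_mult_le_Holder) (auto simp: g_def h_def)
  also have "(LINT y|lebesgue. g y powr p) = (LINT y:Q|lebesgue. norm (f y) powr p)"
    by (simp add: g_powr set_lebesgue_integral_def)
  also have "(LINT y:Q|lebesgue. norm (f y) powr p) powr (1/p) * (LINT y|lebesgue. h y powr p') powr (1/p')
      \<le> (LINT y:Q|lebesgue. norm (f y) powr p) powr (1/p) * measure lebesgue Q powr (1/p')"
    using reducing_matrix_unit_vector(2)[OF V _ Q(2) u] exponents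
    by (intro mult_left_mono powr_mono2)
      (auto simp: h_powr set_lebesgue_integral_def intro: integral_nonneg_AE)
  finally show "(\<integral>\<^sup>+y. ennreal (indicator Q y * (norm (f y) * norm (M y *v u))) \<partial>lebesgue)
      \<le> ennreal ((LINT y:Q|lebesgue. norm (f y) powr p) powr (1/p) * measure lebesgue Q powr (1/p'))"
    unfolding gh by (simp add: ennreal_leI)
qed

lemma reducing_matrix_integral_le:
  fixes M :: "real^'d \<Rightarrow> complex^'n^'n" and f :: "real^'d \<Rightarrow> complex^'n"
  assumes exponents: "1 < p" "1 < p'" "1/p + 1/p' = 1"
    and Q: "Q \<in> sets lebesgue" "0 < measure lebesgue Q"
    and hermitian: "AE y in lebesgue. hermitian (M y)"
    and V: "reducing_matrix M p' Q V"
    and f: "f \<in> borel_measurable lebesgue" "integrable lebesgue (\<lambda>x. norm (f x) powr p)"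
  shows "(\<integral>\<^sup>+y\<in>Q. ennreal (norm (matrix_inv V *v (M y *v f y))) \<partial>lebesgue)
    \<le> ennreal (real CARD('n) * measure lebesgue Q powr (1/p')
               * (LINT y:Q|lebesgue. norm (f y) powr p) powr (1/p))"
proof -
  define B where "B = (LINT y:Q|lebesgue. norm (f y) powr p) powr (1/p) * measure lebesgue Q powr (1/p')"
  define u where "u j = cadj (matrix_inv V) *v axis j 1" for j
  define k where "k j y = ennreal (indicator Q y * (norm (f y) * norm (M y *v u j)))" for j y
  have column: "norm (V *v u j) = 1" for j
    using V by (simp add: u_def reducing_matrix_def posdef_inverse_adjoint_column norm_axis_complex)
  have "AE y in lebesgue. ennreal (norm (matrix_inv V *v (M y *v f y))) * indicator Q y \<le> (\<Sum>j\<in>UNIV. k j y)"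
    using hermitian
  proof eventually_elim
    case (elim y)
    show ?case
    proof (cases "y \<in> Q")
      case True
      then show ?thesis
        using norm_reduced_le_sum_columns[OF elim]
        by (simp add: k_def u_def ennreal_leI)
    qed simp
  qed
  then have "(\<integral>\<^sup>+y\<in>Q. ennreal (norm (matrix_inv V *v (M y *v f y))) \<partial>lebesgue)
      \<le> (\<integral>\<^sup>+y. (\<Sum>j\<in>UNIV. k j y) \<partial>lebesgue)"
    by (rule nn_integral_mono_AE)
  also have "\<dots> = (\<Sum>j\<in>UNIV. \<integral>\<^sup>+y. k j y \<partial>lebesgue)"
    unfolding k_def using reducing_matrix_Holder(1)[OF exponents Q V column f]
    by (rule nn_integral_sum)
  also have "\<dots> \<le> (\<Sum>j\<in>(UNIV::'n set). ennreal B)"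
    unfolding k_def B_def using reducing_matrix_Holder(2)[OF exponents Q V column f]
    by (rule sum_mono)
  also have "\<dots> = ennreal (real CARD('n) * B)"
    by (simp add: B_def ennreal_of_nat_eq_real_of_nat ennreal_mult)
  finally show ?thesis
    by (simp add: B_def mult_ac)
qed

lemma fractional_average_le:
  fixes M :: "real^'d \<Rightarrow> complex^'n^'n" and f :: "real^'d \<Rightarrow> complex^'n"
  assumes exponents: "1 < p" "p' = p / (p - 1)" "1 / q = 1 / p - \<alpha> / real CARD('d)"
    and Q: "Q \<in> sets lebesgue" "0 < measure lebesgue Q"
    and hermitian: "AE y in lebesgue. hermitian (M y)"
    and V: "reducing_matrix M p' Q V"
    and f: "f \<in> borel_measurable lebesgue" "integrable lebesgue (\<lambda>x. norm (f x) powr p)"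
  shows "ennreal (1 / measure lebesgue Q powr (1 - \<alpha> / real CARD('d)))
      * (\<integral>\<^sup>+y\<in>Q. ennreal (norm (matrix_inv V *v (M y *v f y))) \<partial>lebesgue)
    \<le> ennreal (real CARD('n) * measure lebesgue Q powr (- 1 / q)
               * (LINT y:Q|lebesgue. norm (f y) powr p) powr (1 / p))"
proof -
  define m where "m = measure lebesgue Q"
  define F where "F = (LINT y:Q|lebesgue. norm (f y) powr p)"
  have "1 < p'"
    using exponents(1) by (simp add: exponents(2))
  have "1/p + 1/p' = 1"
    using exponents(1) by (simp add: exponents(2) field_simps)
  have "ennreal (1 / m powr (1 - \<alpha> / real CARD('d)))
      * (\<integral>\<^sup>+y\<in>Q. ennreal (norm (matrix_inv V *v (M y *v f y))) \<partial>lebesgue)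
    \<le> ennreal (1 / m powr (1 - \<alpha> / real CARD('d)))
      * ennreal (real CARD('n) * m powr (1/p') * F powr (1/p))"
    unfolding m_def F_def
    using reducing_matrix_integral_le[OF exponents(1) \<open>1 < p'\<close> \<open>1/p + 1/p' = 1\<close> Q hermitian V f]
    by (rule mult_left_mono) simp
  also have "\<dots> = ennreal (real CARD('n) * (m powr (1/p') / m powr (1 - \<alpha> / real CARD('d)))
                            * F powr (1/p))"
    by (simp add: ennreal_mult[symmetric])
  also have "m powr (1/p') / m powr (1 - \<alpha> / real CARD('d)) = m powr (- 1 / q)"
  proof -
    have "1/p' - (1 - \<alpha> / real CARD('d)) = - 1 / q"
      using exponents(3) \<open>1/p + 1/p' = 1\<close> by linarith
    then show ?thesis
      by (simp add: powr_diff[symmetric])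
  qed
  finally show ?thesis
    by (simp add: m_def F_def)
qed

section \<open>The weak-type estimate\<close>

lemma measure_le_of_large_fractional_average:
  fixes m F N c lam p q :: real
  assumes "0 < m" "0 < lam" "0 < p" "p \<le> q" "0 \<le> F" "F \<le> N"
    and large: "lam < c * m powr (- 1 / q) * F powr (1 / p)"
  shows "m \<le> (c / lam) powr q * N powr (q / p - 1) * F"
proof -
  have "0 < q"
    using assms by linarith
  have "0 < F"
    using large \<open>0 < lam\<close> \<open>0 \<le> F\<close> by (cases "F = 0") auto
  have "0 < c"
  proof (rule ccontr)
    assume "\<not> 0 < c"
    then have "c * m powr (- 1 / q) * F powr (1 / p) \<le> 0"
      by (intro mult_nonpos_nonneg) auto
    with large \<open>0 < lam\<close> show False
      by linarith
  qed
  have "lam * m powr (1 / q) < c * F powr (1 / p)"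
    using large \<open>0 < m\<close> by (simp add: powr_minus_divide divide_simps mult_ac)
  then have "m powr (1 / q) < c / lam * F powr (1 / p)"
    using \<open>0 < lam\<close> by (simp add: field_simps)
  then have "(m powr (1 / q)) powr q < (c / lam * F powr (1 / p)) powr q"
    using \<open>0 < q\<close> by (intro powr_less_mono2) auto
  also have "(m powr (1 / q)) powr q = m"
    using \<open>0 < m\<close> \<open>0 < q\<close> by (simp add: powr_powr)
  also have "(c / lam * F powr (1 / p)) powr q = (c / lam) powr q * F powr (q / p)"
    using \<open>0 < c\<close> \<open>0 < lam\<close> by (subst powr_mult) (auto simp: powr_powr)
  also have "\<dots> = (c / lam) powr q * (F powr (q / p - 1) * F)"
    using \<open>0 < F\<close> by (simp add: powr_diff)
  also have "\<dots> \<le> (c / lam) powr q * (N powr (q / p - 1) * F)"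
    using assms \<open>0 < F\<close> by (intro mult_left_mono mult_right_mono powr_mono2) (auto simp: field_simps)
  finally show ?thesis
    by (simp add: mult_ac)
qed

lemma emeasure_Union_large_dyadic_averages_le:
  fixes D :: "(real^'d) set set" and g :: "real^'d \<Rightarrow> real"
  assumes D: "dyadic_grid D" and "G \<subseteq> D"
    and g: "integrable lebesgue g" "\<And>x. 0 \<le> g x"
    and "0 < lam" "0 < p" "p \<le> q"
    and large: "\<And>Q. Q \<in> G \<Longrightarrow> lam < c * measure lebesgue Q powr (- 1 / q) * (LINT y:Q|lebesgue. g y) powr (1 / p)"
  shows "\<Union>G \<in> sets lebesgue"
    and "emeasure lebesgue (\<Union>G) \<le> ennreal ((c / lam) powr q * (LINT x|lebesgue. g x) powr (q / p))"
proof -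
  define N where "N = (LINT x|lebesgue. g x)"
  define K where "K = (c / lam) powr q * N powr (q / p - 1)"
  have Q: "Q \<in> lmeasurable" "0 < measure lebesgue Q" if "Q \<in> G" for Q
    using that \<open>G \<subseteq> D\<close> dyadic_cube_lmeasurable[OF D] dyadic_cube_measure_pos[OF D] by auto
  have F: "0 \<le> (LINT y:Q|lebesgue. g y)" "(LINT y:Q|lebesgue. g y) \<le> N" if "Q \<in> sets lebesgue" for Q
    unfolding N_def using g that by (simp_all add: set_integral_nonneg set_integral_le_integral)
  have small: "measure lebesgue Q \<le> K * (LINT y:Q|lebesgue. g y)" if "Q \<in> G" for Q
    using measure_le_of_large_fractional_average[OF Q(2)[OF that] \<open>0 < lam\<close> \<open>0 < p\<close> \<open>p \<le> q\<close>
        F[OF fmeasurableD[OF Q(1)[OF that]]] large[OF that]]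
    by (simp add: K_def)
  have "0 \<le> K"
    by (simp add: K_def)
  obtain G' where G': "G' \<subseteq> G" "\<Union>G' = \<Union>G" "disjoint G'" "countable G'"
  proof -
    have "measure lebesgue Q \<le> K * N" if "Q \<in> G" for Q
    proof -
      have "K * (LINT y:Q|lebesgue. g y) \<le> K * N"
        using F(2)[OF fmeasurableD[OF Q(1)[OF that]]] \<open>0 \<le> K\<close> by (rule mult_left_mono)
      with small[OF that] show ?thesis
        by linarith
    qed
    then show ?thesis
      using dyadic_maximal_subfamily[OF D \<open>G \<subseteq> D\<close>] that by blast
  qed
  have G'_sets: "G' \<subseteq> sets lebesgue"
    using G'(1) Q(1) by blast
  have "\<Union>G' \<in> sets lebesgue"
    using G'(4) G'_sets by (intro sets.countable_Union) auto
  then show "\<Union>G \<in> sets lebesgue"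
    using G'(2) by simp
  have "emeasure lebesgue (\<Union>G') \<le> ennreal (K * N)"
    unfolding N_def
  proof (rule emeasure_disjoint_Union_le_integral[OF G'(4,3) G'_sets g \<open>0 \<le> K\<close>])
    fix Q assume "Q \<in> G'"
    then have "Q \<in> G"
      using G'(1) by blast
    then show "emeasure lebesgue Q \<le> ennreal (K * (LINT y:Q|lebesgue. g y))"
      using small[of Q] by (simp add: emeasure_eq_measure2[OF Q(1)] ennreal_leI)
  qed
  also have "K * N = (c / lam) powr q * N powr (q / p)"
  proof (cases "N = 0")
    case False
    have "0 \<le> N"
      unfolding N_def using g(2) by (intro integral_nonneg_AE AE_I2)
    with False show ?thesis
      by (simp add: K_def powr_diff)
  qed (simp add: K_def)
  finally show "emeasure lebesgue (\<Union>G) \<le> ennreal ((c / lam) powr q * (LINT x|lebesgue. g x) powr (q / p))"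
    using G'(2) by (simp add: N_def)
qed

lemma max_op_level_set_subset:
  fixes W :: "real^'d \<Rightarrow> complex^'n^'n" and V :: "(real^'d) set \<Rightarrow> complex^'n^'n"
    and f :: "real^'d \<Rightarrow> complex^'n"
  assumes exponents: "1 < p" "p' = p / (p - 1)" "1 / q = 1 / p - \<alpha> / real CARD('d)"
    and W: "matrix_weight W" and D: "dyadic_grid D"
    and V: "\<And>Q. Q \<in> D \<Longrightarrow> reducing_matrix (\<lambda>y. mpow (W y) (- 1 / q)) p' Q (V Q)"
    and f: "f \<in> borel_measurable lebesgue" "integrable lebesgue (\<lambda>x. norm (f x) powr p)"
    and "0 < lam"
  shows "{x. max_op D \<alpha> q W V f x > ennreal lam}
    \<subseteq> \<Union>{Q\<in>D. lam < real CARD('n) * measure lebesgue Q powr (- 1 / q)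
                      * (LINT y:Q|lebesgue. norm (f y) powr p) powr (1 / p)}"
proof safe
  have hermitian: "AE y in lebesgue. hermitian (mpow (W y) (- 1 / q))"
    using W unfolding matrix_weight_def by (auto elim!: eventually_mono intro: mpow_hermitian)
  fix x assume "ennreal lam < max_op D \<alpha> q W V f x"
  then obtain Q where Q: "Q \<in> D" "x \<in> Q" and lt: "ennreal lam <
      ennreal (1 / measure lebesgue Q powr (1 - \<alpha> / real CARD('d))) *
      (\<integral>\<^sup>+y\<in>Q. ennreal (norm (matrix_inv (V Q) *v (mpow (W y) (- 1 / q) *v f y))) \<partial>lebesgue)"
    unfolding max_op_def less_SUP_iff by blast
  note lt
  also have "\<dots> \<le> ennreal (real CARD('n) * measure lebesgue Q powr (- 1 / q)
                            * (LINT y:Q|lebesgue. norm (f y) powr p) powr (1 / p))"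
    using dyadic_cube_lmeasurable[OF D Q(1)] dyadic_cube_measure_pos[OF D Q(1)]
    by (intro fractional_average_le[OF exponents _ _ hermitian V[OF Q(1)] f]) auto
  finally show "x \<in> \<Union>{Q\<in>D. lam < real CARD('n) * measure lebesgue Q powr (- 1 / q)
                      * (LINT y:Q|lebesgue. norm (f y) powr p) powr (1 / p)}"
    using Q \<open>0 < lam\<close> by (auto simp: ennreal_less_iff)
qed

lemma max_op_weak_type:
  fixes W :: "real^'d \<Rightarrow> complex^'n^'n" and V :: "(real^'d) set \<Rightarrow> complex^'n^'n"
    and f :: "real^'d \<Rightarrow> complex^'n"
  assumes exponents: "0 \<le> \<alpha>" "1 < p" "\<alpha> * p < real CARD('d)"
      "1 / q = 1 / p - \<alpha> / real CARD('d)" "p' = p / (p - 1)"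
    and W: "matrix_weight W" and D: "dyadic_grid D"
    and V: "\<And>Q. Q \<in> D \<Longrightarrow> reducing_matrix (\<lambda>y. mpow (W y) (- 1 / q)) p' Q (V Q)"
    and f: "f \<in> borel_measurable lebesgue" "integrable lebesgue (\<lambda>x. norm (f x) powr p)"
    and "0 < lam"
  shows "outer_lebesgue {x. max_op D \<alpha> q W V f x > ennreal lam}
    \<le> ennreal (real CARD('n) powr q * lam powr (- q) * ((LINT x|lebesgue. norm (f x) powr p) powr (1 / p)) powr q)"
proof -
  let ?n = "real CARD('n)" and ?N = "LINT x|lebesgue. norm (f x) powr p"
  let ?G = "{Q\<in>D. lam < ?n * measure lebesgue Q powr (- 1 / q) * (LINT y:Q|lebesgue. norm (f y) powr p) powr (1 / p)}"
  have "0 < p" "p \<le> q"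
  proof -
    have "0 \<le> \<alpha> / real CARD('d)" "\<alpha> / real CARD('d) < 1 / p"
      using exponents(1-3) by (simp_all add: field_simps)
    then have "0 < 1 / q" "1 / q \<le> 1 / p"
      using exponents(4) by simp_all
    then show "0 < p" "p \<le> q"
      using exponents(2) by (simp_all add: field_simps)
  qed
  have "\<Union>?G \<in> sets lebesgue" and "emeasure lebesgue (\<Union>?G) \<le> ennreal ((?n / lam) powr q * ?N powr (q / p))"
    using \<open>0 < lam\<close> \<open>0 < p\<close> \<open>p \<le> q\<close> f(2)
    by (intro emeasure_Union_large_dyadic_averages_le[OF D]; force)+
  moreover note max_op_level_set_subset[OF exponents(2,5,4) W D V f \<open>0 < lam\<close>]
  ultimately have "outer_lebesgue {x. max_op D \<alpha> q W V f x > ennreal lam} \<le> ennreal ((?n / lam) powr q * ?N powr (q / p))"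
    unfolding outer_lebesgue_def by (blast intro: INF_lower2)
  also have "(?n / lam) powr q * ?N powr (q / p) = ?n powr q * lam powr (- q) * (?N powr (1 / p)) powr q"
    using \<open>0 < lam\<close> by (simp add: powr_divide powr_minus_divide powr_powr)
  finally show ?thesis .
qed

theorem mainTheorem10:
  fixes \<alpha> p q p' :: real
  assumes "0 \<le> \<alpha>" "\<alpha> < real CARD('d)"
    and "1 < p" "\<alpha> * p < real CARD('d)"
    and "1 / q = 1 / p - \<alpha> / real CARD('d)"
    and "p' = p / (p - 1)"
  shows "\<exists>C>0. \<forall>(W :: real^'d \<Rightarrow> complex^'n^'n) (V :: (real^'d) set \<Rightarrow> complex^'n^'n)
            (D :: (real^'d) set set) (f :: real^'d \<Rightarrow> complex^'n) (lam::real).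
     matrix_weight W \<longrightarrow>
     (\<forall>K. compact K \<longrightarrow>
        set_integrable lebesgue K (\<lambda>x. onorm (\<lambda>v. mpow (W x) (- 1 / q) *v v) powr p')) \<longrightarrow>
     dyadic_grid D \<longrightarrow>
     (\<forall>Q\<in>D. posdef (V Q) \<and>
        (\<forall>e::complex^'n.
           (1 / measure lebesgue Q * (LINT y:Q|lebesgue. norm (mpow (W y) (- 1 / q) *v e) powr p'))
              powr (1 / p') \<le> norm (V Q *v e) \<and>
           norm (V Q *v e) \<le> sqrt (real CARD('n)) *
             (1 / measure lebesgue Q * (LINT y:Q|lebesgue. norm (mpow (W y) (- 1 / q) *v e) powr p'))
              powr (1 / p'))) \<longrightarrow>
     f \<in> borel_measurable lebesgue \<longrightarrow>
     integrable lebesgue (\<lambda>x. norm (f x) powr p) \<longrightarrow>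
     0 < lam \<longrightarrow>
     outer_lebesgue {x. max_op D \<alpha> q W V f x > ennreal lam}
       \<le> ennreal (C * lam powr (- q) * ((LINT x|lebesgue. norm (f x) powr p) powr (1 / p)) powr q)"
  by (intro exI[of _ "real CARD('n) powr q"] conjI allI impI max_op_weak_type[OF assms(1,3,4,5,6)])
     (auto simp: reducing_matrix_def)

end
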